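(* Let $(S^\Omega,\mathcal T)$ be a resource theory with a fair currency $\mathcal C$ (value function $\mathrm{Val}$) for a target $\mathcal S$. Then for all $V,W\in\mathcal S$ and every $\varepsilon>0$, $$\mathrm{Balance}(V\to W)\ge\mathrm{Yield}(V)-\mathrm{Cost}(W)-\varepsilon,$$ and the same holds with $\varepsilon=0$ when $\mathrm{Yield}(V)$ and $\mathrm{Cost}(W)$ are attained by currency elements. If moreover $\mathcal C$ is tight for both $V$ and $W$, then $$\mathrm{Balance}(V\to W)=\mathrm{Yield}(V)-\mathrm{Cost}(W)=\mathrm{Cost}(V)-\mathrm{Cost}(W).$$
   Context: A resource theory $(S^\Omega,\mathcal T)$ consists of a set $\Omega$, the specification space $S^\Omega$ of all non-empty subsets of $\Omega$ (resources), and a set $\mathcal T$ of maps $f:S^\Omega\to S^\Omega$ acting element-wise, $f(V)=\bigcup_{\nu\in V} f(\{\nu\})$. $V\to W$ iff some $f\in\mathcal T$ has $f(V)\subseteq W$; $\to$ is assumed to be a pre-order. $\mathcal C\subseteq S^\Omega$ is a currency for target $\mathcal S\subseteq S^\Omega$ if (Order) any two elements of $\mathcal C$ are comparable under $\to$ and $\Omega\in\mathcal C$; (Universality) $\Omega\in\mathcal S$ and every $V\in\mathcal S$ has $C,C'\in\mathcal C$ with $C\to V$, $V\to C'$. A value function $\mathrm{Val}:\mathcal C\to\mathbb R_{\ge0}$ satisfies $\mathrm{Val}(C')\ge\mathrm{Val}(C)\iff C'\to C$ and $\mathrm{Val}(\Omega)=0$; $c_{\sup}=\sup_{C\in\mathcal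 C}\mathrm{Val}(C)$ (possibly $\infty$). $\mathrm{Cost}(V)=\inf\{\mathrm{Val}(C): C\in\mathcal C,\ C\to V\}$, $\mathrm{Yield}(V)=\sup\{\mathrm{Val}(C): C\in\mathcal C,\ V\to C\}$. The currency is tight for $V$ if there is $C\in\mathcal C$ with $C\to V$ and $V\to C$. Independence: $C\cap V\ne\emptyset$ for all $C\in\mathcal C,V\in\mathcal S$, and $C\to C'$ implies $C\cap V\to C'\cap V$ for all $V\in\mathcal S$. Balance: $\mathrm{Balance}(V\to W\mid C)=\sup\{\mathrm{Val}(C')-\mathrm{Val}(C): C'\in\mathcal C,\ V\cap C\to W\cap C'\}$ (with $\sup\emptyset=-\infty$) and $\mathrm{Balance}(V\to W)=\sup_{C\in\mathcal C}\mathrm{Balance}(V\to W\mid C)$. Fairness: $\mathcal C$ is independent of $\mathcal S$, and for all $V,W\in\mathcal S$ and $C_1,C_2\in\mathcal C$ with $V\cap C_1\to W\cap C_2$, setting $\Delta=\mathrm{Val}(C_2)-\mathrm{Val}(C_1)$: (F1) for every $C_1'\in\mathcal C$ with $-\Delta\le\mathrm{Val}(C_1')<c_{\sup}-\Delta$ there is $C_2'\in\mathcal C$ with $V\cap C_1'\to W\cap C_2'$ and $\mathrm{Val}(C_2')-\mathrm{Val}(C_1')=\Delta$; (F2) for every $C_2'\in\mathcal C$ with $\Delta\le\mathrm{Val}(C_2')$ there is $C_1'\in\mathcal C$ with $V\cap C_1'\to W\cap C_2'$ and $\mathrm{Val}(C_2')-\mathrm{Val}(C_1')=\Delta$. *)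

theory Defs
  imports Main "HOL-Library.Extended_Real"
begin

definition spec_space :: "'a set \<Rightarrow> 'a set set" where
  "spec_space Om = {V. V \<subseteq> Om \<and> V \<noteq> {}}"

definition conv :: "('a set \<Rightarrow> 'a set) set \<Rightarrow> 'a set \<Rightarrow> 'a set \<Rightarrow> bool" where
  "conv T V W \<longleftrightarrow> (\<exists>f\<in>T. f V \<subseteq> W)"

definition resource_theory :: "'a set \<Rightarrow> ('a set \<Rightarrow> 'a set) set \<Rightarrow> bool" where
  "resource_theory Om T \<longleftrightarrow>
     (\<forall>f\<in>T. \<forall>V\<in>spec_space Om. f V \<in> spec_space Om \<and> f V = (\<Union>\<nu>\<in>V. f {\<nu>})) \<and>
     (\<forall>V\<in>spec_space Om. conv T V V) \<and>
     (\<forall>U\<in>spec_space Om. \<forall>V\<in>spec_space Om. \<forall>W\<in>spec_space Om.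
         conv T U V \<longrightarrow> conv T V W \<longrightarrow> conv T U W)"

definition currency ::
  "'a set \<Rightarrow> ('a set \<Rightarrow> 'a set) set \<Rightarrow> 'a set set \<Rightarrow> 'a set set \<Rightarrow> bool" where
  "currency Om T Cs Ss \<longleftrightarrow>
     Cs \<subseteq> spec_space Om \<and> Ss \<subseteq> spec_space Om \<and>
     (\<forall>C\<in>Cs. \<forall>C'\<in>Cs. conv T C C' \<or> conv T C' C) \<and> Om \<in> Cs \<and>
     Om \<in> Ss \<and> (\<forall>V\<in>Ss. (\<exists>C\<in>Cs. conv T C V) \<and> (\<exists>C'\<in>Cs. conv T V C'))"

definition value_function ::
  "'a set \<Rightarrow> ('a set \<Rightarrow> 'a set) set \<Rightarrow> 'a set set \<Rightarrow> ('a set \<Rightarrow> real) \<Rightarrow> bool" where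
  "value_function Om T Cs Val \<longleftrightarrow>
     (\<forall>C\<in>Cs. Val C \<ge> 0) \<and>
     (\<forall>C\<in>Cs. \<forall>C'\<in>Cs. Val C' \<ge> Val C \<longleftrightarrow> conv T C' C) \<and> Val Om = 0"

definition c_sup :: "'a set set \<Rightarrow> ('a set \<Rightarrow> real) \<Rightarrow> ereal" where
  "c_sup Cs Val = (SUP C\<in>Cs. ereal (Val C))"

definition Cost :: "('a set \<Rightarrow> 'a set) set \<Rightarrow> 'a set set \<Rightarrow> ('a set \<Rightarrow> real) \<Rightarrow> 'a set \<Rightarrow> ereal" where
  "Cost T Cs Val V = Inf {ereal (Val C) | C. C \<in> Cs \<and> conv T C V}"

definition Yield :: "('a set \<Rightarrow> 'a set) set \<Rightarrow> 'a set set \<Rightarrow> ('a set \<Rightarrow> real) \<Rightarrow> 'a set \<Rightarrow> ereal" where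
  "Yield T Cs Val V = Sup {ereal (Val C) | C. C \<in> Cs \<and> conv T V C}"

definition tight :: "('a set \<Rightarrow> 'a set) set \<Rightarrow> 'a set set \<Rightarrow> 'a set \<Rightarrow> bool" where
  "tight T Cs V \<longleftrightarrow> (\<exists>C\<in>Cs. conv T C V \<and> conv T V C)"

definition independent ::
  "('a set \<Rightarrow> 'a set) set \<Rightarrow> 'a set set \<Rightarrow> 'a set set \<Rightarrow> bool" where
  "independent T Cs Ss \<longleftrightarrow>
     (\<forall>C\<in>Cs. \<forall>V\<in>Ss. C \<inter> V \<noteq> {}) \<and>
     (\<forall>C\<in>Cs. \<forall>C'\<in>Cs. conv T C C' \<longrightarrow> (\<forall>V\<in>Ss. conv T (C \<inter> V) (C' \<inter> V)))"

text \<open>Balance, with Sup {} = -\<infinity> in ereal.\<close>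
definition Balance_given ::
  "('a set \<Rightarrow> 'a set) set \<Rightarrow> 'a set set \<Rightarrow> ('a set \<Rightarrow> real) \<Rightarrow> 'a set \<Rightarrow> 'a set \<Rightarrow> 'a set \<Rightarrow> ereal" where
  "Balance_given T Cs Val V W C =
     Sup {ereal (Val C' - Val C) | C'. C' \<in> Cs \<and> conv T (V \<inter> C) (W \<inter> C')}"

definition Balance ::
  "('a set \<Rightarrow> 'a set) set \<Rightarrow> 'a set set \<Rightarrow> ('a set \<Rightarrow> real) \<Rightarrow> 'a set \<Rightarrow> 'a set \<Rightarrow> ereal" where
  "Balance T Cs Val V W = (SUP C\<in>Cs. Balance_given T Cs Val V W C)"

definition fair ::
  "('a set \<Rightarrow> 'a set) set \<Rightarrow> 'a set set \<Rightarrow> 'a set set \<Rightarrow> ('a set \<Rightarrow> real) \<Rightarrow> bool" where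
  "fair T Cs Ss Val \<longleftrightarrow> independent T Cs Ss \<and>
     (\<forall>V\<in>Ss. \<forall>W\<in>Ss. \<forall>C1\<in>Cs. \<forall>C2\<in>Cs. conv T (V \<inter> C1) (W \<inter> C2) \<longrightarrow>
        (let \<Delta> = Val C2 - Val C1 in
          (\<forall>C1'\<in>Cs. - \<Delta> \<le> Val C1' \<and> ereal (Val C1') < c_sup Cs Val - ereal \<Delta> \<longrightarrow>
              (\<exists>C2'\<in>Cs. conv T (V \<inter> C1') (W \<inter> C2') \<and> Val C2' - Val C1' = \<Delta>)) \<and>
          (\<forall>C2'\<in>Cs. \<Delta> \<le> Val C2' \<longrightarrow>
              (\<exists>C1'\<in>Cs. conv T (V \<inter> C1') (W \<inter> C2') \<and> Val C2' - Val C1' = \<Delta>))))"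

end

theory Submission
  imports Defs
begin

text \<open>
  Fairness lets currency be added to or removed from both sides of a conversion while keeping the
  balance fixed. Applied to the trivial conversion \<open>C \<rightarrow> \<Omega>\<close> it shows that a currency with one element
  of positive value has arbitrarily large values. Hence the conversions \<open>V \<rightarrow> C\<^sub>V\<close> and \<open>C\<^sub>W \<rightarrow> W\<close> can be
  shifted into a conversion \<open>V \<inter> C\<^sub>1 \<rightarrow> W \<inter> C\<^sub>2\<close> with balance \<open>Val C\<^sub>V - Val C\<^sub>W\<close>, which gives
  \<open>Balance \<ge> Yield - Cost\<close>. Conversely, for tight \<open>V\<close> and \<open>W\<close>, shifting an arbitrary conversion
  \<open>V \<inter> C\<^sub>1 \<rightarrow> W \<inter> C\<^sub>2\<close> to one between pure currency elements bounds its balance by \<open>Cost V - Cost W\<close>.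
\<close>

locale fair_currency =
  fixes Om :: "'a set" and T :: "('a set \<Rightarrow> 'a set) set"
    and Cs Ss :: "'a set set" and Val :: "'a set \<Rightarrow> real"
  assumes resource_theory: "resource_theory Om T"
    and currency: "currency Om T Cs Ss"
    and value_function: "value_function Om T Cs Val"
    and fair: "fair T Cs Ss Val"
begin

lemma conv_trans:
  "U \<in> spec_space Om \<Longrightarrow> V \<in> spec_space Om \<Longrightarrow> W \<in> spec_space Om
    \<Longrightarrow> conv T U V \<Longrightarrow> conv T V W \<Longrightarrow> conv T U W"
  using resource_theory unfolding resource_theory_def by blast

lemma currency_in_spec: "C \<in> Cs \<Longrightarrow> C \<in> spec_space Om"
  and target_in_spec: "V \<in> Ss \<Longrightarrow> V \<in> spec_space Om"
  and Om_currency: "Om \<in> Cs"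
  and Om_target: "Om \<in> Ss"
  and currency_below: "V \<in> Ss \<Longrightarrow> \<exists>C\<in>Cs. conv T C V"
  and currency_above: "V \<in> Ss \<Longrightarrow> \<exists>C\<in>Cs. conv T V C"
  using currency unfolding currency_def by blast+

lemma Val_Om: "Val Om = 0"
  and Val_nonneg: "C \<in> Cs \<Longrightarrow> 0 \<le> Val C"
  and Val_le_iff_conv: "C \<in> Cs \<Longrightarrow> C' \<in> Cs \<Longrightarrow> Val C \<le> Val C' \<longleftrightarrow> conv T C' C"
  using value_function unfolding value_function_def by blast+

lemma Int_Om [simp]: "X \<in> spec_space Om \<Longrightarrow> X \<inter> Om = X" "X \<in> spec_space Om \<Longrightarrow> Om \<inter> X = X"
  unfolding spec_space_def by auto

lemma Int_currency_in_spec: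
  assumes "C \<in> Cs" "X \<in> Ss"
  shows "X \<inter> C \<in> spec_space Om"
proof -
  have "C \<inter> X \<noteq> {}"
    using fair assms unfolding fair_def independent_def by blast
  then show ?thesis
    using target_in_spec[OF assms(2)] unfolding spec_space_def by blast
qed

lemma fair_choose_target:
  "X \<in> Ss \<Longrightarrow> Y \<in> Ss \<Longrightarrow> C1 \<in> Cs \<Longrightarrow> C2 \<in> Cs \<Longrightarrow> conv T (X \<inter> C1) (Y \<inter> C2)
    \<Longrightarrow> C1' \<in> Cs \<Longrightarrow> Val C1 - Val C2 \<le> Val C1'
    \<Longrightarrow> ereal (Val C1') < c_sup Cs Val - ereal (Val C2 - Val C1)
    \<Longrightarrow> \<exists>C2'\<in>Cs. conv T (X \<inter> C1') (Y \<inter> C2') \<and> Val C2' - Val C1' = Val C2 - Val C1"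
  using fair unfolding fair_def Let_def by (metis minus_diff_eq)

lemma fair_choose_source:
  "X \<in> Ss \<Longrightarrow> Y \<in> Ss \<Longrightarrow> C1 \<in> Cs \<Longrightarrow> C2 \<in> Cs \<Longrightarrow> conv T (X \<inter> C1) (Y \<inter> C2)
    \<Longrightarrow> C2' \<in> Cs \<Longrightarrow> Val C2 - Val C1 \<le> Val C2'
    \<Longrightarrow> \<exists>C1'\<in>Cs. conv T (X \<inter> C1') (Y \<inter> C2') \<and> Val C2' - Val C1' = Val C2 - Val C1"
  using fair unfolding fair_def Let_def by blast

lemma Val_multiples:
  assumes "C \<in> Cs"
  shows "\<exists>C'\<in>Cs. real n * Val C \<le> Val C'"
proof (induction n)
  case 0
  then show ?case using Om_currency Val_Om by force
next
  case (Suc n)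
  then obtain C' where C': "C' \<in> Cs" "real n * Val C \<le> Val C'" by blast
  have "conv T C Om"
    using Val_le_iff_conv[OF Om_currency assms] Val_Om Val_nonneg[OF assms] by simp
  then have "conv T (Om \<inter> C) (Om \<inter> Om)"
    using currency_in_spec[OF assms] by simp
  \<comment> \<open>the pure conversion \<open>C \<rightarrow> \<Omega>\<close> has balance \<open>-Val C\<close>; moving its target to \<open>C'\<close> adds \<open>Val C\<close>\<close>
  from fair_choose_source[OF Om_target Om_target assms Om_currency this C'(1)]
  obtain C'' where "C'' \<in> Cs" "Val C' - Val C'' = - Val C"
    using Val_Om Val_nonneg[OF assms] Val_nonneg[OF C'(1)] by auto
  then show ?case using C'(2) by (intro bexI[of _ C'']) (auto simp: algebra_simps)
qed

lemma c_sup_infinite: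
  assumes "C \<in> Cs" "0 < Val C"
  shows "c_sup Cs Val = \<infinity>"
proof -
  have "\<exists>C'\<in>Cs. x < ereal (Val C')" if finite: "x < \<infinity>" for x
  proof -
    obtain r :: real where r: "x \<le> ereal r"
      using finite by (cases x) auto
    obtain n :: nat where "(r + 1) / Val C \<le> n" using real_arch_simple by blast
    then have "r + 1 \<le> real n * Val C" using assms(2) by (simp add: divide_le_eq)
    moreover obtain C' where "C' \<in> Cs" "real n * Val C \<le> Val C'"
      using Val_multiples[OF assms(1)] by blast
    ultimately show ?thesis using r by (intro bexI[of _ C']) (cases x; auto)
  qed
  then show ?thesis
    unfolding c_sup_def top_ereal_def[symmetric] by (auto simp: SUP_eq_top_iff)
qed

lemma trivial_or_c_sup_infinite: "(\<forall>C\<in>Cs. Val C = 0) \<or> c_sup Cs Val = \<infinity>"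
  using c_sup_infinite Val_nonneg by force

lemma le_Balance:
  assumes "C1 \<in> Cs" "C2 \<in> Cs" "conv T (V \<inter> C1) (W \<inter> C2)"
  shows "ereal (Val C2 - Val C1) \<le> Balance T Cs Val V W"
proof -
  have "ereal (Val C2 - Val C1) \<le> Balance_given T Cs Val V W C1"
    unfolding Balance_given_def using assms by (intro Sup_upper) blast
  then show ?thesis unfolding Balance_def using assms(1) by (rule SUP_upper2[rotated])
qed

lemma exists_conv_with_balance:
  assumes V: "V \<in> Ss" and W: "W \<in> Ss"
    and CV: "CV \<in> Cs" "conv T V CV" and CW: "CW \<in> Cs" "conv T CW W"
  shows "\<exists>C1\<in>Cs. \<exists>C2\<in>Cs. conv T (V \<inter> C1) (W \<inter> C2) \<and> Val C2 - Val C1 = Val CV - Val CW"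
proof -
  have sV: "V \<in> spec_space Om" and sW: "W \<in> spec_space Om"
    using V W target_in_spec by auto
  have sCV: "CV \<in> spec_space Om" and sCW: "CW \<in> spec_space Om"
    using CV CW currency_in_spec by auto
  have convV: "conv T (V \<inter> Om) (Om \<inter> CV)" and convW: "conv T (Om \<inter> CW) (W \<inter> Om)"
    using CV CW sV sW sCV sCW by simp_all
  consider "\<forall>C\<in>Cs. Val C = 0" | "Val CV < Val CW" "c_sup Cs Val = \<infinity>"
    | "Val CW \<le> Val CV" "c_sup Cs Val = \<infinity>"
    using trivial_or_c_sup_infinite by fastforce
  then show ?thesis
  proof cases
    case 1
    then have "conv T CV Om" "conv T Om CW"
      using Val_le_iff_conv Om_currency CV(1) CW(1) Val_Om by auto
    then have "conv T V W"
      using conv_trans CV CW sV sW sCV sCW currency_in_spec[OF Om_currency] by meson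
    then show ?thesis using Om_currency 1 CV CW sV sW by (intro bexI[of _ Om]) auto
  next
    case 2
    \<comment> \<open>shift the source of \<open>V \<rightarrow> C\<^sub>V\<close> so that its target becomes \<open>C\<^sub>W\<close>, then append \<open>C\<^sub>W \<rightarrow> W\<close>\<close>
    then obtain C1 where C1: "C1 \<in> Cs" "conv T (V \<inter> C1) (Om \<inter> CW)" "Val CW - Val C1 = Val CV"
      using fair_choose_source[OF V Om_target Om_currency CV(1) convV CW(1)] Val_Om by auto
    have "conv T (V \<inter> C1) (W \<inter> Om)"
      using conv_trans[OF Int_currency_in_spec[OF C1(1) V] _ _ C1(2) convW] sCW sW by simp
    then show ?thesis using C1 Om_currency Val_Om by (intro bexI[of _ C1] bexI[of _ Om]) auto
  next
    case 3
    \<comment> \<open>shift the target of \<open>C\<^sub>W \<rightarrow> W\<close> so that its source becomes \<open>C\<^sub>V\<close>, then prepend \<open>V \<rightarrow> C\<^sub>V\<close>\<close>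
    then obtain C2 where C2: "C2 \<in> Cs" "conv T (Om \<inter> CV) (W \<inter> C2)" "Val C2 - Val CV = - Val CW"
      using fair_choose_target[OF Om_target W CW(1) Om_currency convW CV(1)] Val_Om by auto
    have "conv T (V \<inter> Om) (W \<inter> C2)"
      using conv_trans[OF _ _ Int_currency_in_spec[OF C2(1) W] convV C2(2)] sV sCV by simp
    then show ?thesis using C2 Om_currency Val_Om by (intro bexI[of _ Om] bexI[of _ C2]) auto
  qed
qed

lemma Cost_finite:
  assumes "W \<in> Ss"
  obtains c where "Cost T Cs Val W = ereal c"
proof -
  obtain C where "C \<in> Cs" "conv T C W" using currency_below[OF assms] by blast
  then have "Cost T Cs Val W \<le> ereal (Val C)" unfolding Cost_def by (intro Inf_lower) blast
  moreover have "0 \<le> Cost T Cs Val W" unfolding Cost_def using Val_nonneg by (intro Inf_greatest) auto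
  ultimately show ?thesis using that by (cases "Cost T Cs Val W") auto
qed

lemma Yield_minus_Cost_le_Balance:
  assumes V: "V \<in> Ss" and W: "W \<in> Ss"
  shows "Yield T Cs Val V - Cost T Cs Val W \<le> Balance T Cs Val V W"
proof -
  obtain c where c: "Cost T Cs Val W = ereal c" using Cost_finite[OF W] .
  have pair: "ereal (Val CV - Val CW) \<le> Balance T Cs Val V W"
    if "CV \<in> Cs" "conv T V CV" "CW \<in> Cs" "conv T CW W" for CV CW
    using exists_conv_with_balance[OF V W that] le_Balance by force
  show ?thesis
  proof (cases "Balance T Cs Val V W")
    case MInf
    obtain CV CW where "CV \<in> Cs" "conv T V CV" "CW \<in> Cs" "conv T CW W"
      using currency_above[OF V] currency_below[OF W] by blast
    with pair MInf show ?thesis by force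
  next
    case (real b)
    have "Yield T Cs Val V \<le> ereal (b + c)"
      unfolding Yield_def
    proof (intro Sup_least, clarify)
      fix CV assume CV: "CV \<in> Cs" "conv T V CV"
      have "ereal (Val CV - b) \<le> Cost T Cs Val W"
        unfolding Cost_def using pair[OF CV] real by (intro Inf_greatest) force
      then show "ereal (Val CV) \<le> ereal (b + c)" using c by simp
    qed
    then show ?thesis using c real by (cases "Yield T Cs Val V") auto
  qed simp
qed

lemma tight_Yield_Cost:
  assumes "V \<in> spec_space Om" "C0 \<in> Cs" "conv T C0 V" "conv T V C0"
  shows "Yield T Cs Val V = ereal (Val C0)" and "Cost T Cs Val V = ereal (Val C0)"
proof -
  have "conv T C0 C" if "C \<in> Cs" "conv T V C" for C
    using conv_trans assms currency_in_spec that by meson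
  then show "Yield T Cs Val V = ereal (Val C0)"
    unfolding Yield_def using assms(2,4) Val_le_iff_conv
    by (intro antisym Sup_least Sup_upper) auto
  have "conv T C C0" if "C \<in> Cs" "conv T C V" for C
    using conv_trans assms currency_in_spec that by meson
  then show "Cost T Cs Val V = ereal (Val C0)"
    unfolding Cost_def using assms(2,3) Val_le_iff_conv
    by (intro antisym Inf_lower Inf_greatest) auto
qed

lemma conv_balance_le:
  assumes V: "V \<in> Ss" and W: "W \<in> Ss"
    and CV: "CV \<in> Cs" "conv T CV V" and CW: "CW \<in> Cs" "conv T W CW"
    and C1: "C1 \<in> Cs" and C2: "C2 \<in> Cs" and conv: "conv T (V \<inter> C1) (W \<inter> C2)"
  shows "Val C2 - Val C1 \<le> Val CV - Val CW"
proof (cases "\<forall>C\<in>Cs. Val C = 0")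
  case True
  then show ?thesis using CV CW C1 C2 by simp
next
  case False
  then have inf: "c_sup Cs Val = \<infinity>" using trivial_or_c_sup_infinite by blast
  have sV: "V \<in> spec_space Om" and sW: "W \<in> spec_space Om"
    using V W target_in_spec by auto
  have sCV: "CV \<in> spec_space Om" and sCW: "CW \<in> spec_space Om"
    using CV CW currency_in_spec by auto
  have convV: "conv T (Om \<inter> CV) (V \<inter> Om)" and convW: "conv T (W \<inter> Om) (Om \<inter> CW)"
    using CV CW sV sW sCV sCW by simp_all
  \<comment> \<open>extend to \<open>A \<rightarrow> V \<inter> C\<^sub>1 \<rightarrow> W \<inter> C\<^sub>2 \<rightarrow> B\<close>, a conversion between currency elements, so \<open>Val B \<le> Val A\<close>\<close>
  obtain A where A: "A \<in> Cs" "conv T (Om \<inter> A) (V \<inter> C1)" "Val C1 - Val A = - Val CV"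
    using fair_choose_source[OF Om_target V CV(1) Om_currency convV C1]
      Val_Om Val_nonneg[OF CV(1)] Val_nonneg[OF C1] by auto
  obtain B where B: "B \<in> Cs" "conv T (W \<inter> C2) (Om \<inter> B)" "Val B - Val C2 = Val CW"
    using fair_choose_target[OF W Om_target Om_currency CW(1) convW C2]
      inf Val_Om Val_nonneg[OF CW(1)] Val_nonneg[OF C2] by auto
  have sA: "Om \<inter> A \<in> spec_space Om" and sB: "Om \<inter> B \<in> spec_space Om"
    using A(1) B(1) currency_in_spec by simp_all
  have "conv T (Om \<inter> A) (W \<inter> C2)"
    using conv_trans[OF sA Int_currency_in_spec[OF C1 V] Int_currency_in_spec[OF C2 W] A(2) conv] .
  then have "conv T (Om \<inter> A) (Om \<inter> B)"
    using conv_trans[OF sA Int_currency_in_spec[OF C2 W] sB _ B(2)] by blast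
  then have "Val B \<le> Val A"
    using Val_le_iff_conv[OF B(1) A(1)] A(1) B(1) currency_in_spec by simp
  then show ?thesis using A B by simp
qed

lemma Balance_le:
  assumes "V \<in> Ss" "W \<in> Ss" "CV \<in> Cs" "conv T CV V" "CW \<in> Cs" "conv T W CW"
  shows "Balance T Cs Val V W \<le> ereal (Val CV - Val CW)"
  unfolding Balance_def Balance_given_def
  using conv_balance_le[OF assms] by (intro SUP_least Sup_least) auto

end

theorem mainTheorem10:
  fixes Om :: "'a set" and T :: "('a set \<Rightarrow> 'a set) set"
    and Cs Ss :: "'a set set" and Val :: "'a set \<Rightarrow> real"
  assumes "resource_theory Om T"
    and "currency Om T Cs Ss"
    and "value_function Om T Cs Val"
    and "fair T Cs Ss Val"
    and "V \<in> Ss" and "W \<in> Ss"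
  shows "(\<forall>\<epsilon>::real. \<epsilon> > 0 \<longrightarrow>
            Balance T Cs Val V W \<ge> Yield T Cs Val V - Cost T Cs Val W - ereal \<epsilon>)
    \<and> ((\<exists>C\<in>Cs. conv T V C \<and> ereal (Val C) = Yield T Cs Val V) \<and>
        (\<exists>C\<in>Cs. conv T C W \<and> ereal (Val C) = Cost T Cs Val W) \<longrightarrow>
        Balance T Cs Val V W \<ge> Yield T Cs Val V - Cost T Cs Val W)
    \<and> (tight T Cs V \<and> tight T Cs W \<longrightarrow>
        Balance T Cs Val V W = Yield T Cs Val V - Cost T Cs Val W \<and>
        Yield T Cs Val V - Cost T Cs Val W = Cost T Cs Val V - Cost T Cs Val W)"
proof -
  interpret fair_currency Om T Cs Ss Val using assms(1-4) by unfold_locales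
  note ge = Yield_minus_Cost_le_Balance[OF assms(5,6)]
  obtain c where c: "Cost T Cs Val W = ereal c" using Cost_finite[OF assms(6)] .
  have "Yield T Cs Val V - Cost T Cs Val W - ereal \<epsilon> \<le> Balance T Cs Val V W" if "0 < \<epsilon>" for \<epsilon>
    using ge that c by (cases "Yield T Cs Val V") (auto intro: order_trans[rotated])
  moreover have "Balance T Cs Val V W = Yield T Cs Val V - Cost T Cs Val W \<and>
      Yield T Cs Val V - Cost T Cs Val W = Cost T Cs Val V - Cost T Cs Val W"
    if tight: "tight T Cs V" "tight T Cs W"
  proof -
    obtain CV CW where CV: "CV \<in> Cs" "conv T CV V" "conv T V CV"
      and CW: "CW \<in> Cs" "conv T CW W" "conv T W CW"
      using tight unfolding tight_def by blast
    note VW = target_in_spec[OF assms(5)] target_in_spec[OF assms(6)]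
    show ?thesis
      using Balance_le[OF assms(5,6) CV(1,2) CW(1,3)] ge
        tight_Yield_Cost[OF VW(1) CV] tight_Yield_Cost[OF VW(2) CW] by simp
  qed
  ultimately show ?thesis using ge by blast
qed

end
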